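(* Let $V$ be the $\mathbb Z$-representation of the dual star quiver $\mathsf S^*_4$ (central vertex $v_1$, arrows $v_2\to v_1$, $v_3\to v_1$, $v_4\to v_1$) in which $v_1$ is represented by $\mathbb Z^2$, $v_2,v_3,v_4$ by $\mathbb Z$, and the three arrows by the maps $\mathbb Z\to\mathbb Z^2$ given by $x\mapsto(x,x)$, $x\mapsto(0,x)$ and $x\mapsto(x,0)$ respectively. Then for every compact discrete valuation ring $\mathfrak o$ with residue field cardinality $q$, writing $t=q^{-s}$, $$\zeta_{V(\mathfrak o)}(s)=\frac{1+2t^3-2t^4-t^7}{(1-t)^3(1-t^3)(1-t^5)(1-qt^4)}.$$
   Context: For a representation $V=(\mathcal L_\iota,f_\phi)$ of a quiver over a ring $R$ and an $R$-algebra $S$, $V(S)=(\mathcal L_\iota\otimes S,f_\phi\otimes\mathrm{id})$. Subrepresentations are tuples of submodules $\Lambda_\iota\le\mathcal L_\iota$ with $f_\phi(\Lambda_{\mathrm{tail}(\phi)})\subseteq\Lambda_{\mathrm{head}(\phi)}$; $\zeta_V(s)=\sum_{V'}\prod_\iota|\mathcal L_\iota:\Lambda_\iota|^{-s}$ over finite-index subrepresentations. *)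

theory Defs
  imports "HOL-Analysis.Analysis" "HOL-Library.Product_Plus"
begin

definition dvr_uniformizer :: "'a::idom \<Rightarrow> bool" where
  "dvr_uniformizer p \<longleftrightarrow> p \<noteq> 0 \<and> \<not> p dvd 1 \<and>
     (\<forall>x. x \<noteq> 0 \<longrightarrow> (\<exists>u n. u dvd 1 \<and> x = u * p ^ n))"

definition val_ball :: "'a::idom \<Rightarrow> 'a \<Rightarrow> nat \<Rightarrow> 'a set" where
  "val_ball p x k = {y. p ^ k dvd (y - x)}"

definition val_compact :: "'a::idom \<Rightarrow> bool" where
  "val_compact p \<longleftrightarrow> (\<forall>C. (\<forall>B\<in>C. \<exists>x k. B = val_ball p x k) \<and> \<Union>C = UNIV
      \<longrightarrow> (\<exists>F\<subseteq>C. finite F \<and> \<Union>F = UNIV))"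

definition compact_dvr_uniformizer :: "'a::idom \<Rightarrow> bool" where
  "compact_dvr_uniformizer p \<longleftrightarrow> dvr_uniformizer p \<and> val_compact p"

definition residue_card :: "'a::idom \<Rightarrow> nat" where
  "residue_card p = card (range (\<lambda>x. {y. p dvd (y - x)}))"

definition cosets_of :: "'b::ab_group_add set \<Rightarrow> 'b set set" where
  "cosets_of H = range (\<lambda>x. {y. y - x \<in> H})"

definition finite_index :: "'b::ab_group_add set \<Rightarrow> bool" where
  "finite_index H \<longleftrightarrow> finite (cosets_of H)"

definition sg_index :: "'b::ab_group_add set \<Rightarrow> nat" where
  "sg_index H = card (cosets_of H)"

definition submod1 :: "'a::idom set \<Rightarrow> bool" where
  "submod1 L \<longleftrightarrow> 0 \<in> L \<and> (\<forall>x\<in>L. \<forall>y\<in>L. x + y \<in> L) \<and> (\<forall>r. \<forall>x\<in>L. r * x \<in> L)"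

definition submod2 :: "('a::idom \<times> 'a) set \<Rightarrow> bool" where
  "submod2 L \<longleftrightarrow> 0 \<in> L \<and> (\<forall>x\<in>L. \<forall>y\<in>L. x + y \<in> L) \<and>
     (\<forall>r a b. (a, b) \<in> L \<longrightarrow> (r * a, r * b) \<in> L)"

text \<open>Finite-index subrepresentations of V(o) for the dual star quiver S*_4:
  L1 \<le> o^2 at v1, L2, L3, L4 \<le> o at v2, v3, v4, arrows
  x \<mapsto> (x,x), x \<mapsto> (0,x), x \<mapsto> (x,0).\<close>
definition subreps_V :: "(('a::idom \<times> 'a) set \<times> 'a set \<times> 'a set \<times> 'a set) set" where
  "subreps_V = {(L1, L2, L3, L4).
      submod2 L1 \<and> submod1 L2 \<and> submod1 L3 \<and> submod1 L4 \<and>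
      finite_index L1 \<and> finite_index L2 \<and> finite_index L3 \<and> finite_index L4 \<and>
      (\<lambda>x. (x, x)) ` L2 \<subseteq> L1 \<and> (\<lambda>x. (0, x)) ` L3 \<subseteq> L1 \<and> (\<lambda>x. (x, 0)) ` L4 \<subseteq> L1}"

definition subrep_index :: "('a::idom \<times> 'a) set \<times> 'a set \<times> 'a set \<times> 'a set \<Rightarrow> nat" where
  "subrep_index W = (case W of (L1, L2, L3, L4) \<Rightarrow>
      sg_index L1 * sg_index L2 * sg_index L3 * sg_index L4)"

end

theory Submission
  imports Defs
begin

text \<open>Every finite-index submodule of o^2 is, for unique a and c and a unique residue b of
  o / p^c written with c digits, the lattice spanned by (p^a, b) and (0, p^c); its index is
  q^(a + c). The ideals at v2, v3, v4 are p^k o, and the three arrows impose exactly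
  k3 \<ge> c, k4 \<ge> a + e_c(b) and k2 \<ge> a + e_c(p^a - b), where e_c(g) is c minus the valuation
  of g, truncated at 0. The free excesses of k2, k3, k4 contribute (1 - t)^-3, and what
  remains is Z = \<Sum>_(a, b) t^(3a + 2c + e_c(b) + e_c(p^a - b)). Splitting off the leading
  digit of b expresses Z linearly through itself (replacing (a, b) by (a + 1, p b) multiplies
  a term by t^5), through \<Sum>_b t^(4c) = 1 / (1 - q t^4) and through
  \<Sum>_b t^(3c + e_c(b)) = (1 - t^4) / ((1 - t^3) (1 - q t^4)); solving gives the
  rational function.\<close>

section \<open>Infinite sums and powers\<close>

lemma has_sum_geometric:
  fixes z :: "'a::{real_normed_field, banach}"
  assumes "norm z < 1"
  shows "((\<lambda>n. z ^ n) has_sum 1 / (1 - z)) UNIV"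
  using assms geometric_sums[OF assms] summable_geometric[of "norm z"]
  by (intro norm_summable_imp_has_sum) (simp_all add: norm_power)

lemma has_sum_nat_from_Suc:
  fixes f :: "nat \<Rightarrow> 'a::topological_comm_monoid_add"
  assumes "((\<lambda>n. f (Suc n)) has_sum s) UNIV"
  shows "(f has_sum f 0 + s) UNIV"
proof -
  have "(f has_sum s) (range Suc)"
    using assms by (subst has_sum_reindex) (simp_all add: o_def)
  then have "(f has_sum f 0 + s) (insert 0 (range Suc))"
    by (intro has_sum_insert) auto
  also have "insert 0 (range Suc) = UNIV"
    using not0_implies_Suc by blast
  finally show ?thesis .
qed

lemma has_sum_product:
  fixes f :: "'i \<Rightarrow> complex" and g :: "'j \<Rightarrow> complex"
  assumes f: "(f has_sum a) A" and g: "(g has_sum b) B"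
  shows "((\<lambda>(x, y). f x * g y) has_sum a * b) (A \<times> B)"
proof -
  have "(\<lambda>x. norm (f x)) summable_on A" "(\<lambda>y. norm (g y)) summable_on B"
    using f g by (metis has_sum_imp_summable summable_on_iff_abs_summable_on_complex)+
  then obtain a' b' where a': "((\<lambda>x. norm (f x)) has_sum a') A" and b': "((\<lambda>y. norm (g y)) has_sum b') B"
    unfolding summable_on_def by blast
  have "(\<lambda>z. norm (case z of (x, y) \<Rightarrow> f x * g y)) summable_on A \<times> B"
    using has_sum_cmult_right[OF b'] has_sum_imp_summable[OF has_sum_cmult_left[OF a']]
    by (intro summable_on_SigmaI[where g = "\<lambda>x. norm (f x) * b'"]) (simp_all add: norm_mult)
  then have "(\<lambda>(x, y). f x * g y) summable_on A \<times> B"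
    by (rule abs_summable_summable)
  then show ?thesis
    using has_sum_cmult_right[OF g] has_sum_cmult_left[OF f]
    by (intro has_sum_SigmaI[where g = "\<lambda>x. f x * b"]) simp_all
qed

lemma has_sum_lists_Cons:
  fixes f :: "'a list \<Rightarrow> 'b::topological_comm_monoid_add"
  assumes "finite A" and Cons: "\<And>s. s \<in> A \<Longrightarrow> ((\<lambda>l. f (s # l)) has_sum v s) (lists A)"
  shows "(f has_sum f [] + sum v A) (lists A)"
proof -
  have "(f has_sum v s) ((#) s ` lists A)" if "s \<in> A" for s
    using Cons[OF that] by (subst has_sum_reindex) (simp_all add: o_def)
  then have "(f has_sum sum v A) (\<Union>s\<in>A. (#) s ` lists A)"
    using \<open>finite A\<close> by (intro sum_has_sum) auto
  then have "(f has_sum f [] + sum v A) (insert [] (\<Union>s\<in>A. (#) s ` lists A))"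
    by (intro has_sum_insert) auto
  also have "insert [] (\<Union>s\<in>A. (#) s ` lists A) = lists A"
  proof (intro equalityI subsetI)
    show "l \<in> insert [] (\<Union>s\<in>A. (#) s ` lists A)" if "l \<in> lists A" for l
      using that by (cases l) auto
  qed auto
  finally show ?thesis .
qed

lemma summable_on_lists_length_power:
  fixes r :: real
  assumes "finite A" "0 \<le> r" "card A * r < 1"
  shows "(\<lambda>l. r ^ length l) summable_on lists A"
proof -
  have "(\<lambda>l. r ^ length l) summable_on (\<Union>n. {l. set l \<subseteq> A \<and> length l = n})"
  proof (rule summable_on_UnionI)
    show "((\<lambda>l. r ^ length l) has_sum (card A * r) ^ n) {l. set l \<subseteq> A \<and> length l = n}" for n
    proof -
      have "((\<lambda>_. r ^ n) has_sum card A ^ n * r ^ n) {l. set l \<subseteq> A \<and> length l = n}"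
        using has_sum_constant[OF finite_lists_length_eq[OF \<open>finite A\<close>, of n], where c = "r ^ n"]
        by (simp add: card_lists_length_eq[OF \<open>finite A\<close>])
      then show ?thesis
        by (subst has_sum_cong[where g = "\<lambda>_. r ^ n"]) (simp_all add: power_mult_distrib)
    qed
    show "(\<lambda>n. (card A * r) ^ n) summable_on UNIV"
      using has_sum_geometric[of "card A * r"] assms has_sum_imp_summable by force
  qed (use \<open>0 \<le> r\<close> in \<open>auto simp: disjoint_family_on_def\<close>)
  also have "(\<Union>n. {l. set l \<subseteq> A \<and> length l = n}) = lists A"
    by auto
  finally show ?thesis .
qed

lemma summable_on_lists:
  fixes f :: "'a list \<Rightarrow> 'b::banach" and r :: real
  assumes "finite A" "0 \<le> r" "card A * r < 1"
    and bound: "\<And>l. l \<in> lists A \<Longrightarrow> norm (f l) \<le> r ^ length l"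
  shows "f summable_on lists A"
  by (rule abs_summable_summable,
      rule Infinite_Sum.abs_summable_on_comparison_test'[OF summable_on_lists_length_power[OF assms(1-3)] bound])

lemma has_sum_lists_length_power:
  fixes z :: "'b::{real_normed_field, banach}"
  assumes "finite A" "card A * norm z < 1"
  shows "((\<lambda>l. z ^ length l) has_sum 1 / (1 - of_nat (card A) * z)) (lists A)"
proof -
  have "(\<lambda>l. z ^ length l) summable_on lists A"
    by (rule summable_on_lists[OF assms(1) norm_ge_zero assms(2)]) (simp add: norm_power)
  then obtain V where V: "((\<lambda>l. z ^ length l) has_sum V) (lists A)"
    unfolding summable_on_def by blast
  have "((\<lambda>l. z ^ length l) has_sum 1 + (\<Sum>s\<in>A. z * V)) (lists A)"
    using has_sum_lists_Cons[OF assms(1), of "\<lambda>l. z ^ length l" "\<lambda>_. z * V"]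
      has_sum_cmult_right[OF V, of z] by simp
  then have "V = 1 + (\<Sum>s\<in>A. z * V)"
    by (rule has_sum_unique[OF V])
  then have "V * (1 - of_nat (card A) * z) = 1"
    by (simp add: algebra_simps)
  moreover have "norm (of_nat (card A) * z) < 1"
    using assms(2) by (simp add: norm_mult)
  then have "1 - of_nat (card A) * z \<noteq> 0"
    by auto
  ultimately have "V = 1 / (1 - of_nat (card A) * z)"
    by (simp add: eq_divide_eq)
  with V show ?thesis
    by simp
qed

lemma of_nat_power_powr: "((of_nat m :: complex) ^ n) powr z = (of_nat m powr z) ^ n"
proof (induction n)
  case (Suc n)
  have "((of_nat m :: complex) ^ Suc n) powr z = (of_nat m * of_nat m ^ n) powr z"
    by simp
  also have "\<dots> = of_nat m powr z * (of_nat m ^ n) powr z"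
    by (rule powr_times_real_left) simp_all
  finally show ?case
    using Suc.IH by simp
qed simp

lemma nat_mult_norm_powr_less_1:
  fixes s :: complex
  assumes "2 \<le> q" "1 < Re s"
  shows "real q * norm ((of_nat q :: complex) powr (- s)) < 1"
proof -
  have "norm ((of_nat q :: complex) powr (- s)) = real q powr (- Re s)"
    by (subst norm_powr_real_powr) auto
  then have "real q * norm ((of_nat q :: complex) powr (- s)) = real q powr (1 - Re s)"
    using assms(1) by (simp add: powr_diff powr_minus divide_inverse)
  also have "\<dots> < 1"
    using assms by (intro powr_less_one) auto
  finally show ?thesis .
qed

section \<open>Cosets and submodules\<close>

lemma coset_eq_iff:
  fixes H :: "'b::ab_group_add set"
  assumes "0 \<in> H" and diff: "\<And>x y. x \<in> H \<Longrightarrow> y \<in> H \<Longrightarrow> x - y \<in> H"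
  shows "{y. y - a \<in> H} = {y. y - b \<in> H} \<longleftrightarrow> a - b \<in> H"
proof
  assume "{y. y - a \<in> H} = {y. y - b \<in> H}"
  moreover have "a \<in> {y. y - a \<in> H}"
    using \<open>0 \<in> H\<close> by simp
  ultimately show "a - b \<in> H"
    by simp
next
  assume ab: "a - b \<in> H"
  then have ba: "b - a \<in> H"
    using diff[OF \<open>0 \<in> H\<close> ab] by simp
  show "{y. y - a \<in> H} = {y. y - b \<in> H}"
  proof safe
    show "y - b \<in> H" if "y - a \<in> H" for y
      using diff[OF that ba] by simp
    show "y - a \<in> H" if "y - b \<in> H" for y
      using diff[OF that ab] by simp
  qed
qed

lemma bij_betw_transversal_cosets:
  fixes H :: "'b::ab_group_add set" and r :: "'i \<Rightarrow> 'b"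
  assumes "0 \<in> H" and "\<And>x y. x \<in> H \<Longrightarrow> y \<in> H \<Longrightarrow> x - y \<in> H"
    and cover: "\<And>x. \<exists>i\<in>A. x - r i \<in> H"
    and unique: "\<And>i j. i \<in> A \<Longrightarrow> j \<in> A \<Longrightarrow> r i - r j \<in> H \<Longrightarrow> i = j"
  shows "bij_betw (\<lambda>i. {y. y - r i \<in> H}) A (cosets_of H)"
proof (rule bij_betwI')
  show "({y. y - r i \<in> H} = {y. y - r j \<in> H}) = (i = j)" if "i \<in> A" "j \<in> A" for i j
    using unique[OF that] coset_eq_iff[OF assms(1,2)] by blast
  show "{y. y - r i \<in> H} \<in> cosets_of H" for i
    unfolding cosets_of_def by blast
  show "\<exists>i\<in>A. C = {y. y - r i \<in> H}" if C: "C \<in> cosets_of H" for C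
  proof -
    obtain x where x: "C = {y. y - x \<in> H}"
      using C unfolding cosets_of_def by blast
    obtain i where "i \<in> A" "x - r i \<in> H"
      using cover by blast
    then show ?thesis
      using x coset_eq_iff[OF assms(1,2)] by blast
  qed
qed

lemma submod2_smult: "submod2 L \<Longrightarrow> (x, y) \<in> L \<Longrightarrow> (r * x, r * y) \<in> L"
  unfolding submod2_def by blast

lemma submod2_add: "submod2 L \<Longrightarrow> u \<in> L \<Longrightarrow> v \<in> L \<Longrightarrow> u + v \<in> L"
  unfolding submod2_def by blast

lemma submod2_diff:
  assumes "submod2 L" "u \<in> L" "v \<in> L"
  shows "u - v \<in> L"
proof -
  have "(- fst v, - snd v) \<in> L"
    using submod2_smult[OF assms(1), of "fst v" "snd v" "- 1"] assms(3) by simp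
  then have "u + (- fst v, - snd v) \<in> L"
    by (rule submod2_add[OF assms(1,2)])
  then show ?thesis
    by (simp add: minus_prod_def plus_prod_def)
qed

lemma submod1_unit_mult_imp_mem:
  assumes L: "submod1 L" and "u dvd 1" "u * x \<in> L"
  shows "x \<in> L"
proof -
  obtain w where "1 = u * w"
    using \<open>u dvd 1\<close> by (rule dvdE)
  then have "x = w * (u * x)"
    by (simp add: algebra_simps)
  also have "\<dots> \<in> L"
    using L \<open>u * x \<in> L\<close> unfolding submod1_def by blast
  finally show ?thesis .
qed

lemma submod1_fst_image:
  assumes L: "submod2 L"
  shows "submod1 (fst ` L)"
  unfolding submod1_def
proof (intro conjI ballI allI)
  have "(0, 0) \<in> L"
    using L unfolding submod2_def zero_prod_def by simp
  then show "0 \<in> fst ` L"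
    by (rule rev_image_eqI) simp
  show "x + x' \<in> fst ` L" if x: "x \<in> fst ` L" "x' \<in> fst ` L" for x x'
  proof -
    obtain u u' where "u \<in> L" "u' \<in> L" "x = fst u" "x' = fst u'"
      using x by blast
    then show ?thesis
      using submod2_add[OF L] by (metis fst_add image_eqI)
  qed
  show "r * x \<in> fst ` L" if x: "x \<in> fst ` L" for r x
  proof -
    obtain y where "(x, y) \<in> L"
      using x by force
    then show ?thesis
      using submod2_smult[OF L] by (metis fst_conv image_eqI)
  qed
qed

lemma submod1_snd_kernel:
  assumes L: "submod2 L"
  shows "submod1 {y. (0, y) \<in> L}"
  unfolding submod1_def
proof (intro conjI ballI allI)
  show "0 \<in> {y. (0, y) \<in> L}"
    using L unfolding submod2_def zero_prod_def by simp
  show "y + y' \<in> {y. (0, y) \<in> L}" if "y \<in> {y. (0, y) \<in> L}" "y' \<in> {y. (0, y) \<in> L}" for y y'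
    using that submod2_add[OF L, of "(0, y)" "(0, y')"] by simp
  show "r * y \<in> {y. (0, y) \<in> L}" if "y \<in> {y. (0, y) \<in> L}" for r y
    using that submod2_smult[OF L, of 0 y r] by simp
qed

section \<open>Compact discrete valuation rings\<close>

lemma residue_class_eq_iff:
  fixes p :: "'a::comm_ring_1"
  shows "{y. p dvd y - a} = {y. p dvd y - b} \<longleftrightarrow> p dvd a - b"
  using coset_eq_iff[of "{z. p dvd z}" a b] by simp

locale compact_dvr =
  fixes p :: "'a::idom"
  assumes dvr_uniformizer: "dvr_uniformizer p" and val_compact: "val_compact p"
begin

lemma uniformizer_nonzero: "p \<noteq> 0"
  and uniformizer_not_unit: "\<not> p dvd 1"
  and unit_times_power: "x \<noteq> 0 \<Longrightarrow> \<exists>u n. u dvd 1 \<and> x = u * p ^ n"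
  using dvr_uniformizer unfolding dvr_uniformizer_def by auto

lemma unit_if_not_dvd:
  assumes "\<not> p dvd x"
  shows "x dvd 1"
proof -
  obtain u n where u: "u dvd 1" "x = u * p ^ n"
    using unit_times_power[of x] assms by auto
  with assms have "n = 0"
    by (cases n) auto
  with u show ?thesis
    by simp
qed

lemma power_dvd_power_iff: "p ^ m dvd p ^ n \<longleftrightarrow> m \<le> n"
proof
  assume dvd: "p ^ m dvd p ^ n"
  show "m \<le> n"
  proof (rule ccontr)
    assume "\<not> m \<le> n"
    with dvd have "p ^ n * p ^ (m - n) dvd p ^ n * 1"
      by (simp flip: power_add)
    then have "p ^ (m - n) dvd 1"
      using uniformizer_nonzero by simp
    moreover have "p dvd p ^ (m - n)"
      using \<open>\<not> m \<le> n\<close> by (simp add: dvd_power)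
    ultimately show False
      using uniformizer_not_unit dvd_trans by blast
  qed
qed (rule le_imp_power_dvd)

lemma one_minus_power_unit:
  assumes "0 < d"
  shows "(1 - p ^ d) dvd 1"
proof (rule unit_if_not_dvd)
  have "p dvd p ^ d"
    using assms by (simp add: dvd_power)
  then show "\<not> p dvd 1 - p ^ d"
    using uniformizer_not_unit by (metis diff_add_cancel dvd_add)
qed

definition pow_ideal :: "nat \<Rightarrow> 'a set" where
  "pow_ideal k = {x. p ^ k dvd x}"

lemma submod1_pow_ideal: "submod1 (pow_ideal k)"
  unfolding submod1_def pow_ideal_def by auto

lemma pow_ideal_eq_iff: "pow_ideal j = pow_ideal k \<longleftrightarrow> j = k"
proof
  assume "pow_ideal j = pow_ideal k"
  then have "p ^ j \<in> pow_ideal k" "p ^ k \<in> pow_ideal j"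
    unfolding pow_ideal_def by (metis dvd_refl mem_Collect_eq)+
  then show "j = k"
    unfolding pow_ideal_def by (simp add: power_dvd_power_iff)
qed simp

lemma submod1_eq_pow_ideal:
  assumes L: "submod1 L" and "L \<noteq> {0}"
  shows "\<exists>k. L = pow_ideal k"
proof -
  have power_mem: "p ^ n \<in> L" if "y \<in> L" "y = u * p ^ n" "u dvd 1" for y u n
    using submod1_unit_mult_imp_mem[OF L \<open>u dvd 1\<close>] that by simp
  obtain x where "x \<in> L" "x \<noteq> 0"
    using assms unfolding submod1_def by auto
  then obtain u n where "x = u * p ^ n" "u dvd 1"
    using unit_times_power by blast
  with \<open>x \<in> L\<close> have "\<exists>n. p ^ n \<in> L"
    using power_mem by blast
  define k where "k = (LEAST n. p ^ n \<in> L)"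
  have k: "p ^ k \<in> L"
    unfolding k_def using \<open>\<exists>n. p ^ n \<in> L\<close> by (rule LeastI_ex)
  have "L = pow_ideal k"
  proof safe
    fix y assume "y \<in> L"
    show "y \<in> pow_ideal k"
    proof (cases "y = 0")
      case False
      then obtain u n where u: "u dvd 1" "y = u * p ^ n"
        using unit_times_power by blast
      have "p ^ n \<in> L"
        using power_mem[OF \<open>y \<in> L\<close> u(2,1)] .
      then have "k \<le> n"
        unfolding k_def by (rule Least_le)
      with u show ?thesis
        by (simp add: pow_ideal_def le_imp_power_dvd)
    qed (simp add: pow_ideal_def)
  next
    fix y assume "y \<in> pow_ideal k"
    then obtain r where "y = p ^ k * r"
      unfolding pow_ideal_def by (auto elim: dvdE)
    moreover have "r * p ^ k \<in> L"
      using k L unfolding submod1_def by blast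
    ultimately show "y \<in> L"
      by (simp add: mult.commute)
  qed
  then show ?thesis ..
qed

lemma ring_infinite: "infinite (UNIV :: 'a set)"
proof
  have "inj (\<lambda>n. p ^ n)"
    by (rule injI) (metis dvd_refl power_dvd_power_iff order_antisym)
  moreover assume "finite (UNIV :: 'a set)"
  ultimately show False
    using finite_imageD[of "\<lambda>n. p ^ n" UNIV] finite_subset[of "range (\<lambda>n. p ^ n)"] by auto
qed

lemma finite_index_ne_zero:
  assumes "finite_index (L :: 'a set)"
  shows "L \<noteq> {0}"
proof
  assume "L = {0}"
  then have "cosets_of L = range (\<lambda>x. {x})"
    unfolding cosets_of_def by auto
  with assms have "finite (range (\<lambda>x::'a. {x}))"
    unfolding finite_index_def by simp
  then show False
    using ring_infinite finite_imageD[OF _ inj_singleton] by blast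
qed

lemma finite_index_pow_ideal_1: "finite_index (pow_ideal 1)"
proof -
  let ?cls = "\<lambda>x. {y. p dvd y - x}"
  have cosets: "cosets_of (pow_ideal 1) = range ?cls"
    unfolding cosets_of_def pow_ideal_def by simp
  have balls: "\<forall>B\<in>range (\<lambda>x. val_ball p x 1). \<exists>x k. B = val_ball p x k"
    by blast
  have "x \<in> val_ball p x 1" for x
    by (simp add: val_ball_def)
  then have "\<Union>(range (\<lambda>x. val_ball p x 1)) = UNIV"
    by blast
  then obtain F where F: "F \<subseteq> range (\<lambda>x. val_ball p x 1)" "finite F" "\<Union>F = UNIV"
    using val_compact[unfolded val_compact_def, rule_format, OF conjI[OF balls]] by blast
  have sub: "range ?cls \<subseteq> F"
  proof
    fix R assume "R \<in> range ?cls"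
    then obtain x where R: "R = ?cls x"
      by (rule rangeE)
    have "x \<in> \<Union>F"
      using F(3) by simp
    then obtain B where "B \<in> F" "x \<in> B"
      by (rule UnionE)
    moreover obtain x' where "B = val_ball p x' 1"
      using F(1) \<open>B \<in> F\<close> by blast
    then have B: "B = ?cls x'"
      by (simp add: val_ball_def)
    ultimately have "R = B"
      using R residue_class_eq_iff[of p x x'] by simp
    with \<open>B \<in> F\<close> show "R \<in> F"
      by simp
  qed
  show ?thesis
    unfolding finite_index_def cosets using finite_subset[OF sub F(2)] .
qed

lemma residue_system_exists:
  "\<exists>S. finite S \<and> 0 \<in> S \<and> 1 \<in> S \<and> (\<forall>x. \<exists>s\<in>S. p dvd x - s)
     \<and> (\<forall>s\<in>S. \<forall>s'\<in>S. p dvd s - s' \<longrightarrow> s = s')"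
proof -
  let ?cls = "\<lambda>x. {y. p dvd y - x}"
  define rep where "rep R = (if 0 \<in> R then 0 else if 1 \<in> R then 1 else SOME x. x \<in> R)" for R :: "'a set"
  have rep: "rep (?cls x) \<in> ?cls x" for x
    unfolding rep_def using someI[of "\<lambda>y. y \<in> ?cls x" x] by auto
  have same_class: "?cls (rep (?cls x)) = ?cls x" for x
    using rep[of x] by (simp add: residue_class_eq_iff)
  define S where "S = rep ` range ?cls"
  have "finite S"
    using finite_index_pow_ideal_1
    unfolding S_def finite_index_def cosets_of_def pow_ideal_def by simp
  moreover have "rep (?cls 0) \<in> S" "rep (?cls 1) \<in> S"
    unfolding S_def by blast+
  then have "0 \<in> S" "1 \<in> S"
    using uniformizer_not_unit by (simp_all add: rep_def)
  moreover have "\<exists>s\<in>S. p dvd x - s" for x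
  proof
    show "rep (?cls x) \<in> S"
      unfolding S_def by blast
    show "p dvd x - rep (?cls x)"
      using rep[of x] by (metis dvd_minus_iff mem_Collect_eq minus_diff_eq)
  qed
  moreover have "s = s'" if "s \<in> S" "s' \<in> S" "p dvd s - s'" for s s'
  proof -
    obtain x x' where s: "s = rep (?cls x)" "s' = rep (?cls x')"
      using \<open>s \<in> S\<close> \<open>s' \<in> S\<close> unfolding S_def by blast
    have "?cls s = ?cls s'"
      using \<open>p dvd s - s'\<close> by (simp add: residue_class_eq_iff)
    then have "?cls x = ?cls x'"
      using same_class s by simp
    with s show ?thesis
      by simp
  qed
  ultimately show ?thesis
    by blast
qed

text \<open>The classes of the vectors \<open>p ^ n * w\<close> in \<open>o\<^sup>2 / L\<close> must repeat, and a repetition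
  \<open>p ^ i * w \<equiv> p ^ j * w\<close> with \<open>i < j\<close> means \<open>(1 - p ^ (j - i)) * p ^ i * w \<in> L\<close>, where
  \<open>1 - p ^ (j - i)\<close> is a unit.\<close>
lemma finite_index_power_smult_mem:
  assumes L: "submod2 L" "finite_index L"
  shows "\<exists>k. (p ^ k * x, p ^ k * y) \<in> L"
proof -
  define v where "v n = (p ^ n * x, p ^ n * y)" for n
  have L0: "0 \<in> L" and L_diff: "\<And>u v. u \<in> L \<Longrightarrow> v \<in> L \<Longrightarrow> u - v \<in> L"
    using L(1) submod2_diff unfolding submod2_def by blast+
  have "finite (range (\<lambda>n. {z. z - v n \<in> L}))"
    using L(2) unfolding finite_index_def cosets_of_def by (rule finite_subset[rotated]) auto
  then have "\<not> inj (\<lambda>n. {z. z - v n \<in> L})"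
    using finite_imageD infinite_UNIV_nat by blast
  then obtain i j where ij: "i < j" "{z. z - v i \<in> L} = {z. z - v j \<in> L}"
    unfolding inj_def by (metis linorder_neqE_nat)
  then have "v i - v j \<in> L"
    using coset_eq_iff[OF L0 L_diff] by blast
  moreover define u where "u = 1 - p ^ (j - i)"
  have "v i - v j = (u * (p ^ i * x), u * (p ^ i * y))"
    using \<open>i < j\<close> unfolding v_def u_def
    by (simp add: algebra_simps flip: power_add)
  moreover obtain w where "1 = u * w"
    using one_minus_power_unit[of "j - i"] \<open>i < j\<close> unfolding u_def by (auto elim: dvdE)
  ultimately have "(w * (u * (p ^ i * x)), w * (u * (p ^ i * y))) \<in> L"
    using submod2_smult[OF L(1)] by metis
  also have "(w * (u * (p ^ i * x)), w * (u * (p ^ i * y))) = (p ^ i * x, p ^ i * y)"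
    using \<open>1 = u * w\<close> by (simp add: algebra_simps flip: mult.assoc)
  finally show ?thesis ..
qed

section \<open>Lattices in Hermite normal form\<close>

text \<open>The lattice spanned by \<open>(p ^ a, b)\<close> and \<open>(0, p ^ c)\<close>.\<close>
definition hnf_lattice :: "nat \<Rightarrow> nat \<Rightarrow> 'a \<Rightarrow> ('a \<times> 'a) set" where
  "hnf_lattice a c b = {(p ^ a * z, y) | z y. p ^ c dvd y - z * b}"

lemma mem_hnf_lattice_iff:
  "(x, y) \<in> hnf_lattice a c b \<longleftrightarrow> (\<exists>z. x = p ^ a * z \<and> p ^ c dvd y - z * b)"
  unfolding hnf_lattice_def by blast

lemma submod2_hnf_lattice: "submod2 (hnf_lattice a c b)"
  unfolding submod2_def
proof (intro conjI ballI allI impI)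
  show "0 \<in> hnf_lattice a c b"
    unfolding zero_prod_def mem_hnf_lattice_iff by (intro exI[of _ 0]) simp
  show "u + v \<in> hnf_lattice a c b" if uv: "u \<in> hnf_lattice a c b" "v \<in> hnf_lattice a c b" for u v
  proof -
    obtain z y z' y' where u: "u = (p ^ a * z, y)" "p ^ c dvd y - z * b"
      and v: "v = (p ^ a * z', y')" "p ^ c dvd y' - z' * b"
      using uv unfolding hnf_lattice_def by blast
    have "p ^ c dvd (y - z * b) + (y' - z' * b)"
      using u(2) v(2) by (rule dvd_add)
    then have "p ^ c dvd (y + y') - (z + z') * b"
      by (simp add: algebra_simps)
    moreover have "p ^ a * z + p ^ a * z' = p ^ a * (z + z')"
      by (simp add: algebra_simps)
    ultimately show ?thesis
      unfolding u v mem_hnf_lattice_iff plus_prod_def by auto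
  qed
  show "(r * x, r * y) \<in> hnf_lattice a c b" if xy: "(x, y) \<in> hnf_lattice a c b" for r x y
  proof -
    obtain z where "x = p ^ a * z" "p ^ c dvd y - z * b"
      using xy unfolding mem_hnf_lattice_iff by blast
    then have "r * x = p ^ a * (r * z)" "p ^ c dvd r * y - (r * z) * b"
      using dvd_mult[of "p ^ c" "y - z * b" r] by (simp_all add: algebra_simps)
    then show ?thesis
      unfolding mem_hnf_lattice_iff by blast
  qed
qed

lemma fst_image_hnf_lattice: "fst ` hnf_lattice a c b = pow_ideal a"
proof (intro equalityI subsetI)
  fix x assume "x \<in> fst ` hnf_lattice a c b"
  then show "x \<in> pow_ideal a"
    unfolding pow_ideal_def hnf_lattice_def by auto
next
  fix x assume "x \<in> pow_ideal a"
  then obtain z where "x = p ^ a * z"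
    unfolding pow_ideal_def by (auto elim: dvdE)
  then have "(x, z * b) \<in> hnf_lattice a c b"
    unfolding mem_hnf_lattice_iff by (intro exI[of _ z]) simp
  then show "x \<in> fst ` hnf_lattice a c b"
    by (rule rev_image_eqI) simp
qed

lemma snd_kernel_hnf_lattice: "{y. (0, y) \<in> hnf_lattice a c b} = pow_ideal c"
  unfolding mem_hnf_lattice_iff pow_ideal_def using uniformizer_nonzero by auto

lemma hnf_lattice_cong:
  assumes "p ^ c dvd b - b'"
  shows "hnf_lattice a c b = hnf_lattice a c b'"
proof -
  have "p ^ c dvd y - z * b \<longleftrightarrow> p ^ c dvd y - z * b'" for y z
  proof -
    have "p ^ c dvd z * (b - b')"
      using assms by simp
    then have "p ^ c dvd (y - z * b) + z * (b - b') \<longleftrightarrow> p ^ c dvd y - z * b"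
      by (rule dvd_add_left_iff)
    moreover have "(y - z * b) + z * (b - b') = y - z * b'"
      by (simp add: algebra_simps)
    ultimately show ?thesis
      by simp
  qed
  then show ?thesis
    unfolding hnf_lattice_def by simp
qed

lemma submod2_eq_hnf_lattice:
  assumes L: "submod2 L" and proj: "fst ` L = pow_ideal a"
    and kernel: "{y. (0, y) \<in> L} = pow_ideal c" and b: "(p ^ a, b) \<in> L"
  shows "L = hnf_lattice a c b"
proof (intro equalityI subsetI)
  fix v assume "v \<in> L"
  obtain x y where v: "v = (x, y)"
    by fastforce
  have "x \<in> pow_ideal a"
    using \<open>v \<in> L\<close> proj v by force
  then obtain z where x: "x = p ^ a * z"
    unfolding pow_ideal_def by (auto elim: dvdE)
  have "(x, y) - (z * p ^ a, z * b) \<in> L"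
    using submod2_diff[OF L] submod2_smult[OF L b] \<open>v \<in> L\<close> v by blast
  then have "(0, y - z * b) \<in> L"
    using x by (simp add: mult.commute)
  then have "y - z * b \<in> pow_ideal c"
    unfolding kernel[symmetric] by simp
  then show "v \<in> hnf_lattice a c b"
    unfolding v mem_hnf_lattice_iff pow_ideal_def using x by blast
next
  fix v assume "v \<in> hnf_lattice a c b"
  then obtain z y where v: "v = (p ^ a * z, y)" and "p ^ c dvd y - z * b"
    unfolding hnf_lattice_def by blast
  then have "(0, y - z * b) \<in> L"
    using kernel unfolding pow_ideal_def by blast
  then have "(0, y - z * b) + (z * p ^ a, z * b) \<in> L"
    using submod2_add[OF L] submod2_smult[OF L b] by blast
  then show "v \<in> L"
    using v by (simp add: mult.commute)
qed

lemma finite_index_eq_hnf_lattice: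
  assumes L: "submod2 L" "finite_index L"
  shows "\<exists>a c b. L = hnf_lattice a c b"
proof -
  obtain k where "(p ^ k * 1, p ^ k * 0) \<in> L"
    using finite_index_power_smult_mem[OF L] by blast
  then have "p ^ k \<in> fst ` L"
    by (rule rev_image_eqI) simp
  moreover have "p ^ k \<noteq> 0"
    using uniformizer_nonzero by simp
  ultimately have "fst ` L \<noteq> {0}"
    by blast
  then obtain a where a: "fst ` L = pow_ideal a"
    using submod1_eq_pow_ideal[OF submod1_fst_image[OF L(1)]] by blast
  obtain k' where "(p ^ k' * 0, p ^ k' * 1) \<in> L"
    using finite_index_power_smult_mem[OF L] by blast
  then have "p ^ k' \<in> {y. (0, y) \<in> L}"
    by simp
  moreover have "p ^ k' \<noteq> 0"
    using uniformizer_nonzero by simp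
  ultimately have "{y. (0, y) \<in> L} \<noteq> {0}"
    by blast
  then obtain c where c: "{y. (0, y) \<in> L} = pow_ideal c"
    using submod1_eq_pow_ideal[OF submod1_snd_kernel[OF L(1)]] by blast
  have "p ^ a \<in> fst ` L"
    unfolding a pow_ideal_def by simp
  then obtain v where "v \<in> L" "p ^ a = fst v"
    by (rule imageE)
  then have "(p ^ a, snd v) \<in> L"
    by simp
  with L(1) a c have "L = hnf_lattice a c (snd v)"
    by (rule submod2_eq_hnf_lattice)
  then show ?thesis
    by blast
qed

lemma image_pow_ideal_subset_iff:
  assumes L: "submod2 L"
  shows "(\<lambda>x. (x * w1, x * w2)) ` pow_ideal k \<subseteq> L \<longleftrightarrow> (p ^ k * w1, p ^ k * w2) \<in> L"
proof
  assume "(\<lambda>x. (x * w1, x * w2)) ` pow_ideal k \<subseteq> L"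
  moreover have "p ^ k \<in> pow_ideal k"
    by (simp add: pow_ideal_def)
  ultimately show "(p ^ k * w1, p ^ k * w2) \<in> L"
    by blast
next
  assume gen: "(p ^ k * w1, p ^ k * w2) \<in> L"
  show "(\<lambda>x. (x * w1, x * w2)) ` pow_ideal k \<subseteq> L"
  proof
    fix v assume "v \<in> (\<lambda>x. (x * w1, x * w2)) ` pow_ideal k"
    then obtain r where "v = (p ^ k * r * w1, p ^ k * r * w2)"
      unfolding pow_ideal_def by (auto elim!: dvdE)
    then have "v = (r * (p ^ k * w1), r * (p ^ k * w2))"
      by (simp add: algebra_simps)
    then show "v \<in> L"
      using submod2_smult[OF L gen] by simp
  qed
qed

text \<open>\<open>ann_exp c g\<close> is the exponent of the annihilator \<open>p ^ ann_exp c g \<cdot> o\<close> of \<open>g\<close> in \<open>o / p ^ c\<close>,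
  i.e.\ \<open>c\<close> minus the valuation of \<open>g\<close>, truncated at \<open>0\<close>.\<close>
definition ann_exp :: "nat \<Rightarrow> 'a \<Rightarrow> nat" where
  "ann_exp c g = (LEAST j. p ^ c dvd p ^ j * g)"

lemma ann_exp_le_iff: "ann_exp c g \<le> j \<longleftrightarrow> p ^ c dvd p ^ j * g"
proof
  have "p ^ c dvd p ^ c * g"
    by simp
  then have "p ^ c dvd p ^ ann_exp c g * g"
    unfolding ann_exp_def by (rule LeastI)
  moreover assume "ann_exp c g \<le> j"
  then have "p ^ j * g = p ^ (j - ann_exp c g) * (p ^ ann_exp c g * g)"
    by (simp add: mult.assoc flip: power_add)
  ultimately show "p ^ c dvd p ^ j * g"
    by (metis dvd_mult)
qed (simp add: ann_exp_def Least_le)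

lemma ann_exp_eqI:
  assumes "\<And>j. p ^ c dvd p ^ j * g \<longleftrightarrow> k \<le> j"
  shows "ann_exp c g = k"
  using assms ann_exp_le_iff[of c g] by (metis le_antisym order_refl)

lemma ann_exp_le: "ann_exp c g \<le> c"
  by (simp add: ann_exp_le_iff)

lemma ann_exp_0 [simp]: "ann_exp 0 g = 0"
  using ann_exp_le[of 0 g] by simp

lemma ann_exp_unit:
  assumes "\<not> p dvd g"
  shows "ann_exp c g = c"
proof (rule ann_exp_eqI)
  fix j
  obtain w where w: "1 = g * w"
    using unit_if_not_dvd[OF assms] by (rule dvdE)
  have "p ^ c dvd p ^ j * g \<longleftrightarrow> p ^ c dvd p ^ j"
  proof
    assume "p ^ c dvd p ^ j * g"
    then have "p ^ c dvd p ^ j * g * w"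
      by (rule dvd_mult2)
    then show "p ^ c dvd p ^ j"
      by (simp add: mult.assoc flip: w)
  qed (rule dvd_mult2)
  then show "p ^ c dvd p ^ j * g \<longleftrightarrow> c \<le> j"
    by (simp add: power_dvd_power_iff)
qed

lemma ann_exp_Suc_mult [simp]: "ann_exp (Suc c) (p * g) = ann_exp c g"
proof (rule ann_exp_eqI)
  fix j
  have "p ^ Suc c dvd p ^ j * (p * g) \<longleftrightarrow> p * p ^ c dvd p * (p ^ j * g)"
    by (simp add: algebra_simps)
  also have "\<dots> \<longleftrightarrow> ann_exp c g \<le> j"
    using uniformizer_nonzero by (simp add: ann_exp_le_iff)
  finally show "p ^ Suc c dvd p ^ j * (p * g) \<longleftrightarrow> ann_exp c g \<le> j" .
qed

lemma ann_exp_uminus [simp]: "ann_exp c (- g) = ann_exp c g"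
  by (rule ann_exp_eqI) (simp add: ann_exp_le_iff)

lemma power_mem_hnf_lattice_iff:
  "(p ^ e, y) \<in> hnf_lattice a c b \<longleftrightarrow> a \<le> e \<and> p ^ c dvd y - p ^ (e - a) * b"
proof
  assume "(p ^ e, y) \<in> hnf_lattice a c b"
  then obtain z where z: "p ^ e = p ^ a * z" "p ^ c dvd y - z * b"
    unfolding mem_hnf_lattice_iff by blast
  then have "a \<le> e"
    using power_dvd_power_iff by (metis dvd_triv_left)
  then have "p ^ a * z = p ^ a * p ^ (e - a)"
    using z(1) by (simp flip: power_add)
  then have "z = p ^ (e - a)"
    using uniformizer_nonzero by simp
  with \<open>a \<le> e\<close> z(2) show "a \<le> e \<and> p ^ c dvd y - p ^ (e - a) * b"
    by simp
next
  assume "a \<le> e \<and> p ^ c dvd y - p ^ (e - a) * b"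
  moreover from this have "p ^ e = p ^ a * p ^ (e - a)"
    by (simp flip: power_add)
  ultimately show "(p ^ e, y) \<in> hnf_lattice a c b"
    unfolding mem_hnf_lattice_iff by blast
qed

lemma diagonal_mem_hnf_lattice_iff:
  "(p ^ e, p ^ e) \<in> hnf_lattice a c b \<longleftrightarrow> a + ann_exp c (p ^ a - b) \<le> e"
proof (cases "a \<le> e")
  case True
  then have "p ^ e - p ^ (e - a) * b = p ^ (e - a) * (p ^ a - b)"
    by (simp add: algebra_simps flip: power_add)
  with True show ?thesis
    by (simp add: power_mem_hnf_lattice_iff le_diff_conv2 add.commute flip: ann_exp_le_iff)
qed (simp add: power_mem_hnf_lattice_iff)

lemma first_axis_mem_hnf_lattice_iff:
  "(p ^ e, 0) \<in> hnf_lattice a c b \<longleftrightarrow> a + ann_exp c b \<le> e"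
  by (cases "a \<le> e") (simp_all add: power_mem_hnf_lattice_iff le_diff_conv2 add.commute flip: ann_exp_le_iff)

lemma second_axis_mem_hnf_lattice_iff: "(0, p ^ e) \<in> hnf_lattice a c b \<longleftrightarrow> c \<le> e"
  using snd_kernel_hnf_lattice[of a c b] unfolding pow_ideal_def set_eq_iff
  by (simp add: power_dvd_power_iff)

end

section \<open>Digit expansions\<close>

text \<open>The digits \<open>0\<close> and \<open>1\<close> are required because the recursion over the leading digit
  of \<open>b\<close> in the generating series treats \<open>b \<equiv> 0\<close> and \<open>b \<equiv> 1 (mod p)\<close> separately.\<close>
locale dvr_digits = compact_dvr p for p :: "'a::idom" +
  fixes S :: "'a set"
  assumes finite_digits: "finite S" and zero_digit: "0 \<in> S" and one_digit: "1 \<in> S"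
    and digit_exists: "\<exists>s\<in>S. p dvd x - s"
    and digit_unique: "s \<in> S \<Longrightarrow> s' \<in> S \<Longrightarrow> p dvd s - s' \<Longrightarrow> s = s'"
begin

primrec from_digits :: "'a list \<Rightarrow> 'a" where
  "from_digits [] = 0"
| "from_digits (s # l) = s + p * from_digits l"

lemma from_digits_exists: "\<exists>l. set l \<subseteq> S \<and> length l = c \<and> p ^ c dvd x - from_digits l"
proof (induction c arbitrary: x)
  case (Suc c)
  obtain s where s: "s \<in> S" "p dvd x - s"
    using digit_exists by blast
  from \<open>p dvd x - s\<close> obtain y where y: "x - s = p * y"
    by (rule dvdE)
  obtain l where l: "set l \<subseteq> S" "length l = c" "p ^ c dvd y - from_digits l"
    using Suc.IH by blast
  have "x - from_digits (s # l) = p * (y - from_digits l)"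
    using y by (simp add: algebra_simps)
  then have "p ^ Suc c dvd x - from_digits (s # l)"
    using l(3) by (simp add: mult_dvd_mono)
  with s l show ?case
    by (intro exI[of _ "s # l"]) simp
qed simp

lemma from_digits_inject:
  assumes "set l \<subseteq> S" "set l' \<subseteq> S" "length l = length l'"
    and "p ^ length l dvd from_digits l - from_digits l'"
  shows "l = l'"
  using assms
proof (induction l arbitrary: l')
  case (Cons s l)
  then obtain s' m where l': "l' = s' # m"
    by (cases l') auto
  have diff: "from_digits (s # l) - from_digits l' = (s - s') + (from_digits l - from_digits m) * p"
    using l' by (simp add: algebra_simps)
  have "p dvd from_digits (s # l) - from_digits l'"
    using Cons.prems(4) by (simp add: dvd_mult_left)
  then have "p dvd s - s'"
    unfolding diff by simp
  then have "s = s'"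
    using digit_unique Cons.prems(1,2) l' by simp
  with Cons.prems(4) diff have "p * p ^ length l dvd p * (from_digits l - from_digits m)"
    by (simp add: mult.commute)
  then have "p ^ length l dvd from_digits l - from_digits m"
    using uniformizer_nonzero by simp
  then have "l = m"
    using Cons.IH Cons.prems(1-3) l' by simp
  with \<open>s = s'\<close> l' show ?case
    by simp
qed simp

lemma bij_betw_digits_cosets_pow_ideal:
  "bij_betw (\<lambda>l. {y. y - from_digits l \<in> pow_ideal k}) {l. set l \<subseteq> S \<and> length l = k}
     (cosets_of (pow_ideal k))"
  by (rule bij_betw_transversal_cosets)
    (use from_digits_exists from_digits_inject in \<open>auto simp: pow_ideal_def\<close>)

lemma finite_index_pow_ideal: "finite_index (pow_ideal k)"
  using bij_betw_finite[OF bij_betw_digits_cosets_pow_ideal] finite_lists_length_eq[OF finite_digits]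
  unfolding finite_index_def by blast

lemma index_pow_ideal: "sg_index (pow_ideal k) = card S ^ k"
  using bij_betw_same_card[OF bij_betw_digits_cosets_pow_ideal] card_lists_length_eq[OF finite_digits]
  unfolding sg_index_def by simp

lemma card_digits: "card S = residue_card p"
proof -
  have "cosets_of (pow_ideal 1) = range (\<lambda>x. {y. p dvd y - x})"
    unfolding cosets_of_def pow_ideal_def by simp
  then show ?thesis
    using index_pow_ideal[of 1] unfolding sg_index_def residue_card_def by simp
qed

lemma two_le_card_digits: "2 \<le> card S"
proof -
  have "{0, 1} \<subseteq> S"
    using zero_digit one_digit by simp
  from card_mono[OF finite_digits this] show ?thesis
    by simp
qed

lemma hnf_lattice_digit_representative:
  "\<exists>l1 l2. set l1 \<subseteq> S \<and> length l1 = a \<and> set l2 \<subseteq> S \<and> length l2 = c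
     \<and> (x - from_digits l1, y - from_digits l2) \<in> hnf_lattice a c b"
proof -
  obtain l1 where l1: "set l1 \<subseteq> S" "length l1 = a" "p ^ a dvd x - from_digits l1"
    using from_digits_exists by blast
  then obtain z where z: "x - from_digits l1 = p ^ a * z"
    by (auto elim: dvdE)
  obtain l2 where l2: "set l2 \<subseteq> S" "length l2 = c" "p ^ c dvd (y - z * b) - from_digits l2"
    using from_digits_exists by blast
  have "p ^ c dvd (y - from_digits l2) - z * b"
    using l2(3) by (simp add: algebra_simps)
  then have "(x - from_digits l1, y - from_digits l2) \<in> hnf_lattice a c b"
    unfolding mem_hnf_lattice_iff z by blast
  with l1 l2 show ?thesis
    by blast
qed

lemma hnf_lattice_digit_representative_unique:
  assumes "set i1 \<subseteq> S" "set j1 \<subseteq> S" "length i1 = a" "length j1 = a"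
    and "set i2 \<subseteq> S" "set j2 \<subseteq> S" "length i2 = c" "length j2 = c"
    and "(from_digits i1 - from_digits j1, from_digits i2 - from_digits j2) \<in> hnf_lattice a c b"
  shows "i1 = j1 \<and> i2 = j2"
proof -
  obtain z where z: "from_digits i1 - from_digits j1 = p ^ a * z"
    "p ^ c dvd (from_digits i2 - from_digits j2) - z * b"
    using assms(9) unfolding mem_hnf_lattice_iff by blast
  then have "i1 = j1"
    using from_digits_inject assms(1-4) by auto
  then have "z = 0"
    using z(1) uniformizer_nonzero by simp
  then have "i2 = j2"
    using from_digits_inject assms(5-8) z(2) by auto
  with \<open>i1 = j1\<close> show ?thesis ..
qed

lemma bij_betw_digits_cosets_hnf_lattice:
  "bij_betw (\<lambda>(l1, l2). {v. v - (from_digits l1, from_digits l2) \<in> hnf_lattice a c b})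
     ({l. set l \<subseteq> S \<and> length l = a} \<times> {l. set l \<subseteq> S \<and> length l = c})
     (cosets_of (hnf_lattice a c b))"
proof -
  let ?r = "\<lambda>(l1, l2). (from_digits l1, from_digits l2)"
  have "bij_betw (\<lambda>i. {v. v - ?r i \<in> hnf_lattice a c b})
      ({l. set l \<subseteq> S \<and> length l = a} \<times> {l. set l \<subseteq> S \<and> length l = c})
      (cosets_of (hnf_lattice a c b))"
  proof (rule bij_betw_transversal_cosets)
    show "0 \<in> hnf_lattice a c b"
      using submod2_hnf_lattice unfolding submod2_def by blast
    show "u - v \<in> hnf_lattice a c b" if "u \<in> hnf_lattice a c b" "v \<in> hnf_lattice a c b" for u v
      using submod2_diff[OF submod2_hnf_lattice that] .
    show "\<exists>i\<in>{l. set l \<subseteq> S \<and> length l = a} \<times> {l. set l \<subseteq> S \<and> length l = c}.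
        v - ?r i \<in> hnf_lattice a c b" for v
    proof -
      obtain l1 l2 where "set l1 \<subseteq> S" "length l1 = a" "set l2 \<subseteq> S" "length l2 = c"
        "(fst v - from_digits l1, snd v - from_digits l2) \<in> hnf_lattice a c b"
        using hnf_lattice_digit_representative by blast
      then show ?thesis
        by (intro bexI[of _ "(l1, l2)"]) (simp_all add: minus_prod_def)
    qed
    show "i = j" if mem: "i \<in> {l. set l \<subseteq> S \<and> length l = a} \<times> {l. set l \<subseteq> S \<and> length l = c}"
      "j \<in> {l. set l \<subseteq> S \<and> length l = a} \<times> {l. set l \<subseteq> S \<and> length l = c}"
      "?r i - ?r j \<in> hnf_lattice a c b" for i j
    proof -
      obtain i1 i2 j1 j2 where ij: "i = (i1, i2)" "j = (j1, j2)"
        by fastforce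
      with mem show ?thesis
        using hnf_lattice_digit_representative_unique[of i1 j1 a i2 j2 c b] by simp
    qed
  qed
  then show ?thesis
    by (simp add: case_prod_unfold)
qed

lemma finite_index_hnf_lattice: "finite_index (hnf_lattice a c b)"
  using bij_betw_finite[OF bij_betw_digits_cosets_hnf_lattice] finite_lists_length_eq[OF finite_digits]
  unfolding finite_index_def by blast

lemma index_hnf_lattice: "sg_index (hnf_lattice a c b) = card S ^ (a + c)"
  using bij_betw_same_card[OF bij_betw_digits_cosets_hnf_lattice]
  unfolding sg_index_def by (simp add: card_cartesian_product card_lists_length_eq[OF finite_digits] power_add)

lemma finite_index_eq_hnf_lattice_digits:
  assumes "submod2 L" "finite_index L"
  shows "\<exists>a l. set l \<subseteq> S \<and> L = hnf_lattice a (length l) (from_digits l)"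
proof -
  obtain a c b where L: "L = hnf_lattice a c b"
    using finite_index_eq_hnf_lattice[OF assms] by blast
  obtain l where l: "set l \<subseteq> S" "length l = c" "p ^ c dvd b - from_digits l"
    using from_digits_exists by blast
  then have "L = hnf_lattice a (length l) (from_digits l)"
    using L hnf_lattice_cong by simp
  with l show ?thesis
    by blast
qed

lemma hnf_lattice_digits_inject:
  assumes "set l \<subseteq> S" "set l' \<subseteq> S"
    and eq: "hnf_lattice a (length l) (from_digits l) = hnf_lattice a' (length l') (from_digits l')"
  shows "a = a' \<and> l = l'"
proof -
  have "pow_ideal a = pow_ideal a'"
    using arg_cong[OF eq, of "image fst"] by (simp only: fst_image_hnf_lattice)
  then have "a = a'"
    by (simp only: pow_ideal_eq_iff)
  have "pow_ideal (length l) = pow_ideal (length l')"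
    using arg_cong[OF eq, of "\<lambda>L. {y. (0, y) \<in> L}"] by (simp only: snd_kernel_hnf_lattice)
  then have "length l = length l'"
    by (simp only: pow_ideal_eq_iff)
  have "(p ^ a, from_digits l') \<in> hnf_lattice a' (length l') (from_digits l')"
    unfolding \<open>a = a'\<close> mem_hnf_lattice_iff by (intro exI[of _ 1]) simp
  then obtain z where z: "p ^ a = p ^ a * z" "p ^ length l dvd from_digits l' - z * from_digits l"
    unfolding eq[symmetric] mem_hnf_lattice_iff by blast
  then have "z = 1"
    using uniformizer_nonzero by simp
  with z(2) \<open>length l = length l'\<close> have "p ^ length l' dvd from_digits l' - from_digits l"
    by simp
  with assms(1,2) \<open>length l = length l'\<close> have "l' = l"
    by (intro from_digits_inject) simp_all
  with \<open>a = a'\<close> show ?thesis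
    by simp
qed

section \<open>Subrepresentations\<close>

lemma hnf_subrep_mem_subreps_V_iff:
  "(hnf_lattice a c b, pow_ideal k2, pow_ideal k3, pow_ideal k4) \<in> subreps_V \<longleftrightarrow>
     a + ann_exp c (p ^ a - b) \<le> k2 \<and> c \<le> k3 \<and> a + ann_exp c b \<le> k4"
proof -
  have L: "submod2 (hnf_lattice a c b)"
    by (rule submod2_hnf_lattice)
  have "(\<lambda>x. (x, x)) ` pow_ideal k2 \<subseteq> hnf_lattice a c b \<longleftrightarrow> (p ^ k2, p ^ k2) \<in> hnf_lattice a c b"
    using image_pow_ideal_subset_iff[OF L, of 1 1] by simp
  moreover have "(\<lambda>x. (0, x)) ` pow_ideal k3 \<subseteq> hnf_lattice a c b \<longleftrightarrow> (0, p ^ k3) \<in> hnf_lattice a c b"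
    using image_pow_ideal_subset_iff[OF L, of 0 1] by simp
  moreover have "(\<lambda>x. (x, 0)) ` pow_ideal k4 \<subseteq> hnf_lattice a c b \<longleftrightarrow> (p ^ k4, 0) \<in> hnf_lattice a c b"
    using image_pow_ideal_subset_iff[OF L, of 1 0] by simp
  ultimately show ?thesis
    unfolding subreps_V_def
    by (simp add: L submod1_pow_ideal finite_index_pow_ideal finite_index_hnf_lattice
        diagonal_mem_hnf_lattice_iff first_axis_mem_hnf_lattice_iff second_axis_mem_hnf_lattice_iff)
qed

lemma subreps_V_normal_form:
  assumes "W \<in> subreps_V"
  obtains a l k2 k3 k4 where "set l \<subseteq> S"
    and "W = (hnf_lattice a (length l) (from_digits l), pow_ideal k2, pow_ideal k3, pow_ideal k4)"
proof -
  obtain L1 L2 L3 L4 where W: "W = (L1, L2, L3, L4)" "submod2 L1" "finite_index L1"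
    "submod1 L2" "submod1 L3" "submod1 L4" "finite_index L2" "finite_index L3" "finite_index L4"
    using assms unfolding subreps_V_def by auto
  obtain a l where "set l \<subseteq> S" "L1 = hnf_lattice a (length l) (from_digits l)"
    using finite_index_eq_hnf_lattice_digits[OF W(2,3)] by blast
  moreover obtain k2 k3 k4 where "L2 = pow_ideal k2" "L3 = pow_ideal k3" "L4 = pow_ideal k4"
    using submod1_eq_pow_ideal W(4-6) finite_index_ne_zero[OF W(7)] finite_index_ne_zero[OF W(8)]
      finite_index_ne_zero[OF W(9)] by metis
  ultimately show ?thesis
    using that W(1) by blast
qed

text \<open>A subrepresentation is parametrised by the Hermite normal form \<open>(a, l)\<close> of its
  \<open>o\<^sup>2\<close>-component and by how far each ideal exceeds the least one allowed by the arrows.\<close>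
definition subrep_of :: "(nat \<times> 'a list) \<times> nat \<times> nat \<times> nat \<Rightarrow> ('a \<times> 'a) set \<times> 'a set \<times> 'a set \<times> 'a set"
  where "subrep_of = (\<lambda>((a, l), d2, d3, d4).
    (hnf_lattice a (length l) (from_digits l),
     pow_ideal (a + ann_exp (length l) (p ^ a - from_digits l) + d2),
     pow_ideal (length l + d3),
     pow_ideal (a + ann_exp (length l) (from_digits l) + d4)))"

definition min_index_exp :: "nat \<Rightarrow> 'a list \<Rightarrow> nat" where
  "min_index_exp a l = (a + length l) + (a + ann_exp (length l) (p ^ a - from_digits l))
     + length l + (a + ann_exp (length l) (from_digits l))"

lemma subrep_index_subrep_of:
  "subrep_index (subrep_of ((a, l), d2, d3, d4)) = card S ^ (min_index_exp a l + d2 + d3 + d4)"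
  unfolding subrep_of_def subrep_index_def min_index_exp_def
  by (simp add: index_hnf_lattice index_pow_ideal power_add)

lemma bij_betw_subrep_of: "bij_betw subrep_of ((UNIV \<times> lists S) \<times> UNIV \<times> UNIV \<times> UNIV) subreps_V"
proof (rule bij_betwI')
  fix x y :: "(nat \<times> 'a list) \<times> nat \<times> nat \<times> nat"
  assume mem: "x \<in> (UNIV \<times> lists S) \<times> UNIV \<times> UNIV \<times> UNIV" "y \<in> (UNIV \<times> lists S) \<times> UNIV \<times> UNIV \<times> UNIV"
  obtain a l d2 d3 d4 a' l' d2' d3' d4' where
    xy: "x = ((a, l), d2, d3, d4)" "y = ((a', l'), d2', d3', d4')"
    by (metis prod.collapse)
  with mem have l: "set l \<subseteq> S" "set l' \<subseteq> S"
    by (auto simp: in_lists_conv_set)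
  show "subrep_of x = subrep_of y \<longleftrightarrow> x = y"
  proof
    assume eq: "subrep_of x = subrep_of y"
    then have "hnf_lattice a (length l) (from_digits l) = hnf_lattice a' (length l') (from_digits l')"
      unfolding xy subrep_of_def by simp
    then have "a = a' \<and> l = l'"
      by (rule hnf_lattice_digits_inject[OF l])
    with eq show "x = y"
      unfolding xy subrep_of_def by (simp add: pow_ideal_eq_iff)
  qed simp
next
  fix x :: "(nat \<times> 'a list) \<times> nat \<times> nat \<times> nat"
  assume "x \<in> (UNIV \<times> lists S) \<times> UNIV \<times> UNIV \<times> UNIV"
  then obtain a l d2 d3 d4 where "x = ((a, l), d2, d3, d4)"
    by auto
  then show "subrep_of x \<in> subreps_V"
    unfolding subrep_of_def by (simp add: hnf_subrep_mem_subreps_V_iff)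
next
  fix W :: "('a \<times> 'a) set \<times> 'a set \<times> 'a set \<times> 'a set"
  assume "W \<in> subreps_V"
  then obtain a l k2 k3 k4 where l: "set l \<subseteq> S"
    and W: "W = (hnf_lattice a (length l) (from_digits l), pow_ideal k2, pow_ideal k3, pow_ideal k4)"
    by (rule subreps_V_normal_form)
  let ?e2 = "a + ann_exp (length l) (p ^ a - from_digits l)" and ?e4 = "a + ann_exp (length l) (from_digits l)"
  have "?e2 \<le> k2" "length l \<le> k3" "?e4 \<le> k4"
    using \<open>W \<in> subreps_V\<close> unfolding W by (simp_all add: hnf_subrep_mem_subreps_V_iff)
  then have "W = subrep_of ((a, l), k2 - ?e2, k3 - length l, k4 - ?e4)"
    unfolding subrep_of_def W by simp
  moreover have "((a, l), k2 - ?e2, k3 - length l, k4 - ?e4) \<in> (UNIV \<times> lists S) \<times> UNIV \<times> UNIV \<times> UNIV"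
    using l by (simp add: in_lists_conv_set subset_iff)
  ultimately show "\<exists>x\<in>(UNIV \<times> lists S) \<times> UNIV \<times> UNIV \<times> UNIV. W = subrep_of x"
    by blast
qed

section \<open>Generating series\<close>

lemma not_dvd_from_digits_Cons:
  assumes "s \<in> S" "s \<noteq> 0"
  shows "\<not> p dvd from_digits (s # l)"
proof -
  have "\<not> p dvd s"
    using digit_unique[OF assms(1) zero_digit] assms(2) by auto
  then show ?thesis
    by (simp add: dvd_add_left_iff)
qed

lemma min_index_exp_Nil: "min_index_exp a [] = 3 * a"
  by (simp add: min_index_exp_def)

lemma min_index_exp_lower_bound: "a + 2 * length l \<le> min_index_exp a l"
  by (simp add: min_index_exp_def)

lemma min_index_exp_0_Cons_0:
  "min_index_exp 0 (0 # l) = 3 + (3 * length l + ann_exp (length l) (from_digits l))"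
proof -
  have "\<not> p dvd 1 - p * from_digits l"
    using uniformizer_not_unit by (simp add: dvd_diff_left_iff)
  then show ?thesis
    by (simp add: min_index_exp_def ann_exp_unit)
qed

lemma min_index_exp_0_Cons_1:
  "min_index_exp 0 (1 # l) = 3 + (3 * length l + ann_exp (length l) (from_digits l))"
proof -
  have "\<not> p dvd 1 + p * from_digits l"
    using uniformizer_not_unit by (simp add: dvd_add_left_iff)
  then show ?thesis
    by (simp add: min_index_exp_def ann_exp_unit)
qed

lemma min_index_exp_0_Cons_unit:
  assumes "s \<in> S" "s \<noteq> 0" "s \<noteq> 1"
  shows "min_index_exp 0 (s # l) = 4 * Suc (length l)"
proof -
  have "\<not> p dvd 1 - s"
    using digit_unique[OF one_digit assms(1)] assms(3) by auto
  then have "\<not> p dvd 1 - from_digits (s # l)"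
    by (simp add: dvd_diff_left_iff diff_diff_eq[symmetric])
  with not_dvd_from_digits_Cons[OF assms(1,2)] show ?thesis
    by (simp add: min_index_exp_def ann_exp_unit del: from_digits.simps)
qed

lemma min_index_exp_Suc_Cons_0: "min_index_exp (Suc a) (0 # l) = min_index_exp a l + 5"
proof -
  have "p ^ Suc a - from_digits (0 # l) = p * (p ^ a - from_digits l)"
    by (simp add: algebra_simps)
  moreover have "from_digits (0 # l) = p * from_digits l"
    by simp
  ultimately show ?thesis
    by (simp add: min_index_exp_def del: from_digits.simps)
qed

lemma min_index_exp_Suc_Cons_unit:
  assumes "s \<in> S" "s \<noteq> 0"
  shows "min_index_exp (Suc a) (s # l) = 3 * Suc a + 4 * Suc (length l)"
proof -
  have "\<not> p dvd from_digits (s # l)"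
    using not_dvd_from_digits_Cons[OF assms] .
  moreover from this have "\<not> p dvd p ^ Suc a - from_digits (s # l)"
    by (simp add: dvd_diff_right_iff del: from_digits.simps)
  ultimately show ?thesis
    by (simp add: min_index_exp_def ann_exp_unit del: from_digits.simps)
qed

lemma sum_digits_if_zero:
  fixes x y :: "'b::comm_ring_1"
  shows "(\<Sum>s\<in>S. if s = 0 then x else y) = x + (of_nat (card S) - 1) * y"
proof -
  have "(\<Sum>s\<in>S. if s = 0 then x else y) = x + (\<Sum>s\<in>S - {0}. y)"
    using sum.remove[OF finite_digits zero_digit, of "\<lambda>s. if s = 0 then x else y"] by simp
  also have "(\<Sum>s\<in>S - {0}. y) = of_nat (card S - 1) * y"
    using zero_digit finite_digits by simp
  also have "of_nat (card S - 1) = (of_nat (card S) - 1 :: 'b)"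
    using two_le_card_digits by (simp add: of_nat_diff)
  finally show ?thesis .
qed

lemma sum_digits_if_zero_one:
  fixes x y :: "'b::comm_ring_1"
  shows "(\<Sum>s\<in>S. if s = 0 \<or> s = 1 then x else y) = 2 * x + (of_nat (card S) - 2) * y"
proof -
  define f where "f s = (if s = 0 \<or> s = 1 then x else y)" for s :: 'a
  have S1: "1 \<in> S - {0}"
    using one_digit by simp
  have "sum f S = f 0 + sum f (S - {0})"
    by (rule sum.remove[OF finite_digits zero_digit])
  also have "sum f (S - {0}) = f 1 + sum f (S - {0} - {1})"
    by (rule sum.remove[OF finite_Diff[OF finite_digits] S1])
  also have "sum f (S - {0} - {1}) = of_nat (card S - 2) * y"
    using zero_digit one_digit finite_digits by (simp add: f_def card_Diff_subset numeral_2_eq_2)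
  also have "of_nat (card S - 2) = (of_nat (card S) - 2 :: 'b)"
    using two_le_card_digits by (simp add: of_nat_diff)
  finally show ?thesis
    by (simp add: f_def algebra_simps)
qed

context
  fixes t :: complex
  assumes small: "card S * norm t < 1"
begin

lemma norm_less_1: "norm t < 1"
proof -
  have "1 * norm t \<le> card S * norm t"
    using two_le_card_digits by (intro mult_right_mono) simp_all
  with small show ?thesis
    by simp
qed

lemma card_norm_power_less_1: "0 < k \<Longrightarrow> card S * norm (t ^ k) < 1"
proof -
  assume "0 < k"
  then have "norm (t ^ k) \<le> norm t"
    using norm_less_1 by (simp add: norm_power power_le_one_iff power_decreasing[of 1 k "norm t", simplified])
  then have "card S * norm (t ^ k) \<le> card S * norm t"
    by (simp add: mult_left_mono)
  with small show ?thesis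
    by simp
qed

lemma one_minus_card_power_nonzero:
  assumes "0 < k"
  shows "1 - card S * t ^ k \<noteq> 0"
proof
  assume "1 - card S * t ^ k = 0"
  then have "norm (of_nat (card S) * t ^ k) = 1"
    by simp
  with card_norm_power_less_1[OF assms] show False
    by (simp add: norm_mult)
qed

lemma one_minus_power_nonzero:
  assumes "0 < k"
  shows "1 - t ^ k \<noteq> 0"
proof
  assume "1 - t ^ k = 0"
  then have "norm (t ^ k) = 1"
    by simp
  then have "norm t ^ k = 1"
    by (simp add: norm_power)
  with norm_less_1 assms show False
    using power_less_one_iff[of "norm t" k] by simp
qed

lemma has_sum_length_power_4:
  "((\<lambda>l. t ^ (4 * length l)) has_sum 1 / (1 - card S * t ^ 4)) (lists S)"
  using has_sum_lists_length_power[OF finite_digits card_norm_power_less_1[of 4]] by (simp add: power_mult)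

lemma summable_ann_exp_series:
  "(\<lambda>l. t ^ (3 * length l + ann_exp (length l) (from_digits l))) summable_on lists S"
proof (rule summable_on_lists[OF finite_digits _ card_norm_power_less_1[of 3]])
  show "norm (t ^ (3 * length l + ann_exp (length l) (from_digits l))) \<le> norm (t ^ 3) ^ length l" for l
    unfolding norm_power power_mult[symmetric]
    using norm_less_1 by (intro power_decreasing) simp_all
qed simp_all

lemma has_sum_ann_exp_series:
  "((\<lambda>l. t ^ (3 * length l + ann_exp (length l) (from_digits l))) has_sum
     (1 - t ^ 4) / ((1 - t ^ 3) * (1 - card S * t ^ 4))) (lists S)"
proof -
  let ?f = "\<lambda>l. t ^ (3 * length l + ann_exp (length l) (from_digits l))"
  define V where "V = 1 / (1 - card S * t ^ 4)"
  obtain K where K: "(?f has_sum K) (lists S)"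
    using summable_ann_exp_series unfolding summable_on_def by blast
  have "(?f has_sum ?f [] + (\<Sum>s\<in>S. if s = 0 then t ^ 3 * K else t ^ 4 * V)) (lists S)"
  proof (rule has_sum_lists_Cons[OF finite_digits])
    fix s assume "s \<in> S"
    show "((\<lambda>l. ?f (s # l)) has_sum (if s = 0 then t ^ 3 * K else t ^ 4 * V)) (lists S)"
    proof (cases "s = 0")
      case True
      have "((\<lambda>l. t ^ 3 * ?f l) has_sum t ^ 3 * K) (lists S)"
        using K by (rule has_sum_cmult_right)
      with True show ?thesis
        by (simp add: power_add mult.assoc)
    next
      case False
      have "((\<lambda>l. t ^ 4 * t ^ (4 * length l)) has_sum t ^ 4 * V) (lists S)"
        using has_sum_length_power_4 unfolding V_def by (rule has_sum_cmult_right)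
      with False not_dvd_from_digits_Cons[OF \<open>s \<in> S\<close>] show ?thesis
        by (simp add: ann_exp_unit power_add del: from_digits.simps)
    qed
  qed
  then have "K = ?f [] + (\<Sum>s\<in>S. if s = 0 then t ^ 3 * K else t ^ 4 * V)"
    by (rule has_sum_unique[OF K])
  then have "K * (1 - t ^ 3) = 1 + (of_nat (card S) - 1) * t ^ 4 * V"
    by (simp add: sum_digits_if_zero algebra_simps)
  moreover have "V * (1 - card S * t ^ 4) = 1"
    unfolding V_def using one_minus_card_power_nonzero[of 4] by simp
  ultimately have "K * ((1 - t ^ 3) * (1 - card S * t ^ 4)) = 1 - t ^ 4"
    by algebra
  moreover have "(1 - t ^ 3) * (1 - card S * t ^ 4) \<noteq> 0"
    using one_minus_power_nonzero[of 3] one_minus_card_power_nonzero[of 4] by simp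
  ultimately have "K = (1 - t ^ 4) / ((1 - t ^ 3) * (1 - card S * t ^ 4))"
    by (simp add: eq_divide_eq)
  with K show ?thesis
    by simp
qed

lemma summable_min_index_exp_fiber: "(\<lambda>l. t ^ min_index_exp a l) summable_on lists S"
proof (rule summable_on_lists[OF finite_digits _ card_norm_power_less_1[of 2]])
  show "norm (t ^ min_index_exp a l) \<le> norm (t ^ 2) ^ length l" for l
    unfolding norm_power power_mult[symmetric]
    using norm_less_1 min_index_exp_lower_bound[of a l] by (intro power_decreasing) simp_all
qed simp_all

lemma summable_min_index_exp: "(\<lambda>(a, l). t ^ min_index_exp a l) summable_on UNIV \<times> lists S"
proof -
  let ?C = "1 / (1 - card S * norm t ^ 2)"
  have C: "((\<lambda>l. (norm t ^ 2) ^ length l) has_sum ?C) (lists S)"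
    using has_sum_lists_length_power[OF finite_digits, of "norm t ^ 2"] card_norm_power_less_1[of 2]
    by (simp add: norm_power)
  have "(\<lambda>a. norm t ^ a * ?C) summable_on UNIV"
    using has_sum_geometric[of "norm t"] norm_less_1
    by (intro summable_on_cmult_left has_sum_imp_summable) auto
  then have "(\<lambda>(a, l). norm t ^ a * (norm t ^ 2) ^ length l) summable_on UNIV \<times> lists S"
    using has_sum_cmult_right[OF C]
    by (intro summable_on_SigmaI[where g = "\<lambda>a. norm t ^ a * ?C"]) auto
  then have "(\<lambda>x. norm (case x of (a, l) \<Rightarrow> t ^ min_index_exp a l)) summable_on UNIV \<times> lists S"
  proof (rule Infinite_Sum.abs_summable_on_comparison_test')
    fix x :: "nat \<times> 'a list"
    obtain a l where x: "x = (a, l)"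
      by fastforce
    have "norm t ^ min_index_exp a l \<le> norm t ^ (a + 2 * length l)"
      using norm_less_1 min_index_exp_lower_bound[of a l] by (intro power_decreasing) simp_all
    then show "norm (case x of (a, l) \<Rightarrow> t ^ min_index_exp a l)
        \<le> (case x of (a, l) \<Rightarrow> norm t ^ a * (norm t ^ 2) ^ length l)"
      by (simp add: x norm_power power_add power_mult)
  qed
  then show ?thesis
    by (rule abs_summable_summable)
qed

lemma has_sum_min_index_exp_0:
  "((\<lambda>l. t ^ min_index_exp 0 l) has_sum
     1 + 2 * t ^ 3 * ((1 - t ^ 4) / ((1 - t ^ 3) * (1 - card S * t ^ 4)))
       + (of_nat (card S) - 2) * t ^ 4 * (1 / (1 - card S * t ^ 4))) (lists S)"
proof -
  define K where "K = (1 - t ^ 4) / ((1 - t ^ 3) * (1 - card S * t ^ 4))"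
  define V where "V = 1 / (1 - card S * t ^ 4)"
  have "((\<lambda>l. t ^ min_index_exp 0 l) has_sum
      t ^ min_index_exp 0 [] + (\<Sum>s\<in>S. if s = 0 \<or> s = 1 then t ^ 3 * K else t ^ 4 * V)) (lists S)"
  proof (rule has_sum_lists_Cons[OF finite_digits])
    fix s assume "s \<in> S"
    show "((\<lambda>l. t ^ min_index_exp 0 (s # l)) has_sum
        (if s = 0 \<or> s = 1 then t ^ 3 * K else t ^ 4 * V)) (lists S)"
    proof (cases "s = 0 \<or> s = 1")
      case True
      then have "min_index_exp 0 (s # l) = 3 + (3 * length l + ann_exp (length l) (from_digits l))" for l
        using min_index_exp_0_Cons_0 min_index_exp_0_Cons_1 by blast
      with True has_sum_cmult_right[OF has_sum_ann_exp_series, of "t ^ 3"] show ?thesis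
        unfolding K_def by (simp add: power_add)
    next
      case False
      with \<open>s \<in> S\<close> have "min_index_exp 0 (s # l) = 4 * Suc (length l)" for l
        by (simp add: min_index_exp_0_Cons_unit)
      with False has_sum_cmult_right[OF has_sum_length_power_4, of "t ^ 4"] show ?thesis
        unfolding V_def by (simp add: power_add)
    qed
  qed
  then show ?thesis
    unfolding K_def[symmetric] V_def[symmetric]
    by (simp add: sum_digits_if_zero_one min_index_exp_Nil algebra_simps)
qed

lemma has_sum_min_index_exp_Suc:
  assumes "((\<lambda>l. t ^ min_index_exp a l) has_sum z) (lists S)"
  shows "((\<lambda>l. t ^ min_index_exp (Suc a) l) has_sum
    (t ^ 3) ^ Suc a * ((1 - t ^ 4) / (1 - card S * t ^ 4)) + t ^ 5 * z) (lists S)"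
proof -
  define V where "V = 1 / (1 - card S * t ^ 4)"
  have Cons: "((\<lambda>l. t ^ min_index_exp (Suc a) l) has_sum
      t ^ min_index_exp (Suc a) [] + (\<Sum>s\<in>S. if s = 0 then t ^ 5 * z else t ^ (3 * Suc a + 4) * V))
      (lists S)"
  proof (rule has_sum_lists_Cons[OF finite_digits])
    fix s assume "s \<in> S"
    show "((\<lambda>l. t ^ min_index_exp (Suc a) (s # l)) has_sum
        (if s = 0 then t ^ 5 * z else t ^ (3 * Suc a + 4) * V)) (lists S)"
    proof (cases "s = 0")
      case True
      with has_sum_cmult_right[OF assms, of "t ^ 5"] show ?thesis
        by (simp add: min_index_exp_Suc_Cons_0 power_add mult.commute)
    next
      case False
      with \<open>s \<in> S\<close> have "t ^ min_index_exp (Suc a) (s # l) = t ^ (3 * Suc a + 4) * t ^ (4 * length l)" for l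
        by (simp add: min_index_exp_Suc_Cons_unit add.assoc flip: power_add)
      with False has_sum_cmult_right[OF has_sum_length_power_4, of "t ^ (3 * Suc a + 4)"] show ?thesis
        unfolding V_def by simp
    qed
  qed
  have "V * (1 - card S * t ^ 4) = 1"
    unfolding V_def using one_minus_card_power_nonzero[of 4] by simp
  then have identity: "u + (t ^ 5 * z + (of_nat (card S) - 1) * (u * t ^ 4 * V)) = u * ((1 - t ^ 4) * V) + t ^ 5 * z"
    for u
    by algebra
  have "t ^ min_index_exp (Suc a) [] + (\<Sum>s\<in>S. if s = 0 then t ^ 5 * z else t ^ (3 * Suc a + 4) * V)
      = (t ^ 3) ^ Suc a + (t ^ 5 * z + (of_nat (card S) - 1) * ((t ^ 3) ^ Suc a * t ^ 4 * V))"
    by (simp only: sum_digits_if_zero min_index_exp_Nil power_add power_mult if_True if_False)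
  also have "\<dots> = (t ^ 3) ^ Suc a * ((1 - t ^ 4) * V) + t ^ 5 * z"
    by (rule identity)
  also have "(1 - t ^ 4) * V = (1 - t ^ 4) / (1 - card S * t ^ 4)"
    unfolding V_def by simp
  finally show ?thesis
    using Cons by simp
qed

lemma min_index_exp_series_recursion:
  assumes Z: "((\<lambda>(a, l). t ^ min_index_exp a l) has_sum Z) (UNIV \<times> lists S)"
  shows "Z * (1 - t ^ 5) = 1 + 3 * t ^ 3 * ((1 - t ^ 4) / ((1 - t ^ 3) * (1 - card S * t ^ 4)))
    + (of_nat (card S) - 2) * t ^ 4 * (1 / (1 - card S * t ^ 4))"
proof -
  define K where "K = (1 - t ^ 4) / ((1 - t ^ 3) * (1 - card S * t ^ 4))"
  define Zf where "Zf a = infsum (\<lambda>l. t ^ min_index_exp a l) (lists S)" for a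
  have fiber: "((\<lambda>l. t ^ min_index_exp a l) has_sum Zf a) (lists S)" for a
    unfolding Zf_def using summable_min_index_exp_fiber by simp
  have Zf: "(Zf has_sum Z) UNIV"
    by (rule has_sum_Sigma'[OF Z]) (simp add: fiber)
  have Zf_Suc: "Zf (Suc a) = t ^ 3 * (t ^ 3) ^ a * ((1 - t ^ 3) * K) + t ^ 5 * Zf a" for a
  proof -
    have "Zf (Suc a) = (t ^ 3) ^ Suc a * ((1 - t ^ 4) / (1 - card S * t ^ 4)) + t ^ 5 * Zf a"
      using fiber has_sum_min_index_exp_Suc[OF fiber] by (rule has_sum_unique)
    then show ?thesis
      unfolding K_def using one_minus_power_nonzero[of 3] by simp
  qed
  have "norm (t ^ 3) < 1"
    using norm_less_1 power_less_one_iff[of "norm t" 3] by (simp add: norm_power)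
  then have "((\<lambda>a. t ^ 3 * (t ^ 3) ^ a * ((1 - t ^ 3) * K)) has_sum
      t ^ 3 * (1 / (1 - t ^ 3)) * ((1 - t ^ 3) * K)) UNIV"
    by (intro has_sum_cmult_left has_sum_cmult_right has_sum_geometric)
  also have "t ^ 3 * (1 / (1 - t ^ 3)) * ((1 - t ^ 3) * K) = t ^ 3 * K"
    using one_minus_power_nonzero[of 3] by simp
  finally have "((\<lambda>a. Zf (Suc a)) has_sum t ^ 3 * K + t ^ 5 * Z) UNIV"
    unfolding Zf_Suc using has_sum_cmult_right[OF Zf] by (rule has_sum_add)
  then have "(Zf has_sum Zf 0 + (t ^ 3 * K + t ^ 5 * Z)) UNIV"
    by (rule has_sum_nat_from_Suc)
  with Zf have "Z = Zf 0 + (t ^ 3 * K + t ^ 5 * Z)"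
    by (rule has_sum_unique)
  moreover have "Zf 0 = 1 + 2 * t ^ 3 * K + (of_nat (card S) - 2) * t ^ 4 * (1 / (1 - card S * t ^ 4))"
    using fiber has_sum_min_index_exp_0 unfolding K_def by (rule has_sum_unique)
  ultimately show ?thesis
    unfolding K_def[symmetric] by algebra
qed

lemma has_sum_min_index_exp:
  "((\<lambda>(a, l). t ^ min_index_exp a l) has_sum
     (1 + 2 * t ^ 3 - 2 * t ^ 4 - t ^ 7) / ((1 - t ^ 3) * (1 - t ^ 5) * (1 - card S * t ^ 4)))
     (UNIV \<times> lists S)"
proof -
  define K where "K = (1 - t ^ 4) / ((1 - t ^ 3) * (1 - card S * t ^ 4))"
  define V where "V = 1 / (1 - card S * t ^ 4)"
  obtain Z where Z: "((\<lambda>(a, l). t ^ min_index_exp a l) has_sum Z) (UNIV \<times> lists S)"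
    using summable_min_index_exp unfolding summable_on_def by blast
  have "Z * ((1 - t ^ 3) * (1 - t ^ 5) * (1 - card S * t ^ 4))
      = (1 + 3 * t ^ 3 * K + (of_nat (card S) - 2) * t ^ 4 * V) * ((1 - t ^ 3) * (1 - card S * t ^ 4))"
    using min_index_exp_series_recursion[OF Z] unfolding K_def[symmetric] V_def[symmetric]
    by (simp add: ac_simps)
  also have "\<dots> = (1 - t ^ 3) * (1 - card S * t ^ 4) + 3 * t ^ 3 * (1 - t ^ 4)
      + (of_nat (card S) - 2) * t ^ 4 * (1 - t ^ 3)"
  proof -
    have "V * (1 - card S * t ^ 4) = 1"
      unfolding V_def using one_minus_card_power_nonzero[of 4] by simp
    moreover have "K * ((1 - t ^ 3) * (1 - card S * t ^ 4)) = 1 - t ^ 4"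
      unfolding K_def using one_minus_power_nonzero[of 3] one_minus_card_power_nonzero[of 4] by simp
    ultimately show ?thesis
      by algebra
  qed
  also have "\<dots> = 1 + 2 * t ^ 3 - 2 * t ^ 4 - t ^ 7"
    by algebra
  finally have "Z * ((1 - t ^ 3) * (1 - t ^ 5) * (1 - card S * t ^ 4)) = 1 + 2 * t ^ 3 - 2 * t ^ 4 - t ^ 7" .
  moreover have "(1 - t ^ 3) * (1 - t ^ 5) * (1 - card S * t ^ 4) \<noteq> 0"
    using one_minus_power_nonzero[of 3] one_minus_power_nonzero[of 5] one_minus_card_power_nonzero[of 4]
    by simp
  ultimately have "Z = (1 + 2 * t ^ 3 - 2 * t ^ 4 - t ^ 7) / ((1 - t ^ 3) * (1 - t ^ 5) * (1 - card S * t ^ 4))"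
    by (simp add: eq_divide_eq)
  with Z show ?thesis
    by simp
qed

lemma has_sum_subrep_exponent:
  "((\<lambda>((a, l), d2, d3, d4). t ^ (min_index_exp a l + d2 + d3 + d4)) has_sum
     (1 + 2 * t ^ 3 - 2 * t ^ 4 - t ^ 7) / ((1 - t) ^ 3 * (1 - t ^ 3) * (1 - t ^ 5) * (1 - card S * t ^ 4)))
     ((UNIV \<times> lists S) \<times> UNIV \<times> UNIV \<times> UNIV)"
proof -
  have geometric: "((\<lambda>d. t ^ d) has_sum 1 / (1 - t)) UNIV"
    using norm_less_1 by (rule has_sum_geometric)
  have "((\<lambda>((a, l), d2, d3, d4). t ^ min_index_exp a l * (t ^ d2 * (t ^ d3 * t ^ d4))) has_sum
      (1 + 2 * t ^ 3 - 2 * t ^ 4 - t ^ 7) / ((1 - t ^ 3) * (1 - t ^ 5) * (1 - card S * t ^ 4))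
        * (1 / (1 - t) * (1 / (1 - t) * (1 / (1 - t))))) ((UNIV \<times> lists S) \<times> UNIV \<times> UNIV \<times> UNIV)"
    using has_sum_product[OF has_sum_min_index_exp
        has_sum_product[OF geometric has_sum_product[OF geometric geometric]]]
    by (simp add: case_prod_unfold)
  also have "(1 + 2 * t ^ 3 - 2 * t ^ 4 - t ^ 7) / ((1 - t ^ 3) * (1 - t ^ 5) * (1 - card S * t ^ 4))
        * (1 / (1 - t) * (1 / (1 - t) * (1 / (1 - t))))
      = (1 + 2 * t ^ 3 - 2 * t ^ 4 - t ^ 7) / ((1 - t) ^ 3 * (1 - t ^ 3) * (1 - t ^ 5) * (1 - card S * t ^ 4))"
    by (simp only: divide_inverse inverse_mult_distrib power3_eq_cube mult_ac mult_1_left)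
  finally show ?thesis
    by (rule has_sum_cong[THEN iffD1, rotated]) (auto simp: power_add)
qed

end

lemma has_sum_subreps_V:
  fixes s :: complex
  assumes "1 < Re s"
  defines "t \<equiv> (of_nat (card S) :: complex) powr (- s)"
  shows "((\<lambda>W::('a \<times> 'a) set \<times> 'a set \<times> 'a set \<times> 'a set. of_nat (subrep_index W) powr (- s)) has_sum
    (1 + 2 * t ^ 3 - 2 * t ^ 4 - t ^ 7) / ((1 - t) ^ 3 * (1 - t ^ 3) * (1 - t ^ 5) * (1 - of_nat (card S) * t ^ 4)))
    subreps_V"
proof -
  have small: "card S * norm t < 1"
    unfolding t_def using two_le_card_digits assms(1) by (rule nat_mult_norm_powr_less_1)
  have index: "of_nat (subrep_index (subrep_of ((a, l), d2, d3, d4))) powr (- s)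
      = t ^ (min_index_exp a l + d2 + d3 + d4)" for a l d2 d3 d4
    unfolding subrep_index_subrep_of t_def by (simp add: of_nat_power_powr)
  have "((\<lambda>x. of_nat (subrep_index (subrep_of x)) powr (- s)) has_sum
      (1 + 2 * t ^ 3 - 2 * t ^ 4 - t ^ 7) / ((1 - t) ^ 3 * (1 - t ^ 3) * (1 - t ^ 5) * (1 - of_nat (card S) * t ^ 4)))
      ((UNIV \<times> lists S) \<times> UNIV \<times> UNIV \<times> UNIV)"
    using has_sum_subrep_exponent[OF small] by (rule has_sum_cong[THEN iffD1, rotated]) (auto simp: index)
  then show ?thesis
    by (rule has_sum_reindex_bij_betw[OF bij_betw_subrep_of, THEN iffD1])
qed

end

theorem proposition3p10:
  fixes p :: "'a::idom" and q :: nat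
  assumes "compact_dvr_uniformizer p"
    and "q = residue_card p"
  shows "\<exists>s0::real. \<forall>s::complex. Re s > s0 \<longrightarrow>
    (let t = (of_nat q :: complex) powr (- s) in
     ((\<lambda>W::('a \<times> 'a) set \<times> 'a set \<times> 'a set \<times> 'a set.
          (of_nat (subrep_index W) :: complex) powr (- s))
       has_sum ((1 + 2 * t ^ 3 - 2 * t ^ 4 - t ^ 7) /
                ((1 - t) ^ 3 * (1 - t ^ 3) * (1 - t ^ 5) * (1 - of_nat q * t ^ 4))))
       subreps_V)"
proof (intro exI[of _ 1] allI impI)
  fix s :: complex
  assume "1 < Re s"
  interpret compact_dvr p
    using assms(1) unfolding compact_dvr_uniformizer_def by unfold_locales auto
  obtain S where "finite S" "0 \<in> S" "1 \<in> S" "\<And>x. \<exists>s\<in>S. p dvd x - s"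
    "\<And>s s'. s \<in> S \<Longrightarrow> s' \<in> S \<Longrightarrow> p dvd s - s' \<Longrightarrow> s = s'"
    using residue_system_exists by blast
  then interpret dvr_digits p S
    by unfold_locales
  have q: "q = card S"
    using assms(2) card_digits by simp
  show "let t = (of_nat q :: complex) powr (- s) in
     ((\<lambda>W::('a \<times> 'a) set \<times> 'a set \<times> 'a set \<times> 'a set.
          (of_nat (subrep_index W) :: complex) powr (- s))
       has_sum ((1 + 2 * t ^ 3 - 2 * t ^ 4 - t ^ 7) /
                ((1 - t) ^ 3 * (1 - t ^ 3) * (1 - t ^ 5) * (1 - of_nat q * t ^ 4))))
       subreps_V"
    unfolding Let_def q by (rule has_sum_subreps_V[OF \<open>1 < Re s\<close>])
qed

end
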